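(* For every constant $c\ge 1$ there exist graphs $G$ (with arbitrarily large number of vertices $n$) such that the following spanning-tree sampling procedure requires $\rho=\Omega(\log n)$ rounds in order to approximate all cuts of $G$ within a factor $c$ with constant probability: compute the effective conductance $c_e$ of every edge; start with $E'=\emptyset$, $w\equiv 0$; for each of $\rho$ rounds, independently pick a uniformly random spanning tree $T$ of $G$, and for each edge $e\in T$ add $e$ to $E'$ and increase $w_e$ by $c_e/\rho$. That is, if $\rho=o(\log n)$ then with probability bounded below by a positive constant there is a set $S\subseteq V$ with $w(\delta(S))$ and $|\delta(S)|$ differing by more than a factor $c$.
   Context: Graphs here may have parallel edges (unit weight per copy). $\delta(S)$ is the set of edges with exactly one endpoint in $S$. The effective conductance $c_e$ of an edge $e=st$ is the current flowing from $s$ to $t$ when every edge is a unit resistor and a unit voltage difference is imposed between $s$ and $t$. *)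

theory Defs
  imports "HOL-Probability.Probability"
begin

text \<open>A multigraph on vertex set {0..<n}: a list es of edges (pairs of endpoints);
  parallel edges are distinct list positions. Edges are identified by their index i < length es.\<close>

definition wf_graph :: "nat \<Rightarrow> (nat \<times> nat) list \<Rightarrow> bool" where
  "wf_graph n es = (\<forall>(u,v)\<in>set es. u < n \<and> v < n \<and> u \<noteq> v)"

definition adj_on :: "(nat \<times> nat) list \<Rightarrow> nat set \<Rightarrow> (nat \<times> nat) set" where
  "adj_on es T = {(u,v). \<exists>i\<in>T. i < length es \<and> (es ! i = (u,v) \<or> es ! i = (v,u))}"

definition connected_graph :: "nat \<Rightarrow> (nat \<times> nat) list \<Rightarrow> bool" where
  "connected_graph n es = (n \<ge> 1 \<and> (\<forall>u<n. \<forall>v<n. (u,v) \<in> (adj_on es {..<length es})\<^sup>*))"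

definition is_spanning_tree :: "nat \<Rightarrow> (nat \<times> nat) list \<Rightarrow> nat set \<Rightarrow> bool" where
  "is_spanning_tree n es T = (T \<subseteq> {..<length es} \<and> card T + 1 = n \<and>
     (\<forall>u<n. \<forall>v<n. (u,v) \<in> (adj_on es T)\<^sup>*))"

definition spanning_trees :: "nat \<Rightarrow> (nat \<times> nat) list \<Rightarrow> nat set set" where
  "spanning_trees n es = {T. is_spanning_tree n es T}"

text \<open>Net current leaving vertex v under potential phi, every edge a unit resistor.\<close>
definition netflow :: "(nat \<times> nat) list \<Rightarrow> (nat \<Rightarrow> real) \<Rightarrow> nat \<Rightarrow> real" where
  "netflow es phi v = (\<Sum>i<length es.
      (if fst (es ! i) = v then phi v - phi (snd (es ! i)) else 0)
    + (if snd (es ! i) = v then phi v - phi (fst (es ! i)) else 0))"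

definition eff_conductance :: "nat \<Rightarrow> (nat \<times> nat) list \<Rightarrow> nat \<Rightarrow> nat \<Rightarrow> real" where
  "eff_conductance n es s t = (THE c. \<exists>phi. phi s = 1 \<and> phi t = 0 \<and>
      (\<forall>v<n. v \<noteq> s \<and> v \<noteq> t \<longrightarrow> netflow es phi v = 0) \<and> c = netflow es phi s)"

definition edge_conductance :: "nat \<Rightarrow> (nat \<times> nat) list \<Rightarrow> nat \<Rightarrow> real" where
  "edge_conductance n es i = eff_conductance n es (fst (es ! i)) (snd (es ! i))"

definition sample_weight :: "nat \<Rightarrow> (nat \<times> nat) list \<Rightarrow> nat \<Rightarrow> (nat \<Rightarrow> nat set) \<Rightarrow> nat \<Rightarrow> real" where
  "sample_weight n es rho Ts i =
     real (card {j. j < rho \<and> i \<in> Ts j}) * (edge_conductance n es i / real rho)"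

definition cut_edges :: "(nat \<times> nat) list \<Rightarrow> nat set \<Rightarrow> nat set" where
  "cut_edges es S = {i. i < length es \<and> ((fst (es ! i) \<in> S) \<noteq> (snd (es ! i) \<in> S))}"

definition bad_cut_approx :: "real \<Rightarrow> nat \<Rightarrow> (nat \<times> nat) list \<Rightarrow> nat \<Rightarrow> (nat \<Rightarrow> nat set) \<Rightarrow> bool" where
  "bad_cut_approx c n es rho Ts = (\<exists>S\<subseteq>{..<n}.
     (\<Sum>i\<in>cut_edges es S. sample_weight n es rho Ts i) > c * real (card (cut_edges es S)) \<or>
     real (card (cut_edges es S)) > c * (\<Sum>i\<in>cut_edges es S. sample_weight n es rho Ts i))"

definition tree_samples :: "nat \<Rightarrow> (nat \<times> nat) list \<Rightarrow> nat \<Rightarrow> (nat \<Rightarrow> nat set) pmf" where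
  "tree_samples n es rho = Pi_pmf {..<rho} {} (\<lambda>_. pmf_of_set (spanning_trees n es))"

end

theory Submission
  imports Defs
begin

text \<open>
  The graph consists of G gadgets glued at a common hub.  A gadget has a root a, side vertices
  b_1, ..., b_m, the m root edges a b_j and, for every j, K parallel edges from b_j to the hub.
  Spanning trees of the graph are exactly the tuples of spanning trees of the gadgets, so under
  uniform sampling the gadgets are independent.  A fixed fraction q > 0 of the gadget trees
  contains all m root edges.  If this happens to some gadget in all \<rho> rounds, each of its root
  edges gets weight equal to its effective conductance m (K + 1) / (m + K), which exceeds c for
  K = m \<ge> 2c, so the cut around that root is overweighted by more than a factor c.  No gadget
  is that lucky with probability (1 - q^\<rho>)^G \<le> 1/2 as long as \<rho> log (1/q) \<le> log G, and the
  number of vertices is only quadratic in G.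
\<close>

lemma sum_lessThan_add:
  fixes f :: "nat \<Rightarrow> 'a::comm_monoid_add"
  shows "(\<Sum>i<a + b. f i) = (\<Sum>i<a. f i) + (\<Sum>r<b. f (a + r))"
  by (induction b) (auto simp: add.assoc)

lemma sum_lessThan_mult:
  fixes f :: "nat \<Rightarrow> 'a::comm_monoid_add"
  shows "(\<Sum>i<a * b. f i) = (\<Sum>h<a. \<Sum>r<b. f (h * b + r))"
proof (induction a)
  case (Suc a)
  have "(\<Sum>i<Suc a * b. f i) = (\<Sum>i<a * b + b. f i)" by (simp add: add.commute)
  also have "\<dots> = (\<Sum>i<a * b. f i) + (\<Sum>r<b. f (a * b + r))" by (rule sum_lessThan_add)
  finally show ?case using Suc by simp
qed simp

lemma sum_lessThan_if_eq:
  assumes "r < (m::nat)"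
  shows "(\<Sum>j<m. if j = r then a else b) = a + (real m - 1) * (b::real)"
proof -
  have "(\<Sum>j<m. if j = r then a else b) = a + (\<Sum>j\<in>{..<m} - {r}. b)"
    using assms by (subst sum.remove[of _ r]) (auto intro!: sum.cong)
  also have "(\<Sum>j\<in>{..<m} - {r}. b) = (real m - 1) * b"
    using assms by (simp add: of_nat_diff)
  finally show ?thesis .
qed

lemma sum_eq_card_mult_imp_eq:
  fixes f :: "'a \<Rightarrow> nat"
  assumes "finite A" "\<And>x. x \<in> A \<Longrightarrow> c \<le> f x" "(\<Sum>x\<in>A. f x) = card A * c" "y \<in> A"
  shows "f y = c"
proof (rule ccontr)
  assume "f y \<noteq> c"
  with assms(2,4) have "(\<Sum>x\<in>A. c) < (\<Sum>x\<in>A. f x)"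
    using assms(1) by (intro sum_strict_mono_ex1) force+
  with assms(3) show False by simp
qed

lemma one_minus_power_power_le_half:
  fixes q :: real
  assumes q: "0 < q" "q \<le> 1" and G: "1 \<le> G" and rho: "real rho * - ln q \<le> ln (real G)"
  shows "(1 - q ^ rho) ^ G \<le> 1 / 2"
proof -
  have "- ln (real G) \<le> ln (q ^ rho)" using q rho by (simp add: ln_realpow)
  hence "exp (- ln (real G)) \<le> q ^ rho" using q by (metis exp_ln exp_le_cancel_iff zero_less_power)
  hence "1 / real G \<le> q ^ rho" using G by (simp add: exp_minus inverse_eq_divide)
  moreover have "q ^ rho \<le> 1" using q by (simp add: power_le_one)
  ultimately have "(1 - q ^ rho) ^ G \<le> (1 - 1 / real G) ^ G"
    by (intro power_mono) auto
  also have "\<dots> \<le> exp (- (1 / real G)) ^ G"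
    using G exp_ge_add_one_self[of "- (1 / real G)"] by (intro power_mono) auto
  also have "\<dots> = exp (- 1)" using G by (simp add: exp_of_nat_mult[symmetric])
  also have "\<dots> \<le> 1 / 2"
    using exp_ge_add_one_self[of 1] by (simp add: exp_minus field_simps)
  finally show ?thesis .
qed

lemma eventually_mult_le_ln_of_ratio_tendsto_0:
  fixes rho N G :: "nat \<Rightarrow> nat" and a :: real
  assumes lim: "(\<lambda>k. real (rho k) / ln (real (N k))) \<longlonglongrightarrow> 0"
    and N: "\<And>k. 2 \<le> N k" "\<And>k. N k \<le> (G k)\<^sup>2" and a: "0 \<le> a"
  shows "\<forall>\<^sub>F k in sequentially. real (rho k) * a \<le> ln (real (G k))"
proof -
  define eps where "eps = 1 / (2 * (a + 1))"
  have "0 < eps" using a by (simp add: eps_def)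
  with lim have "\<forall>\<^sub>F k in sequentially. real (rho k) / ln (real (N k)) < eps"
    by (rule order_tendstoD)
  thus ?thesis
  proof (rule eventually_mono)
    fix k assume k: "real (rho k) / ln (real (N k)) < eps"
    have ln_N: "0 < ln (real (N k))" using N(1)[of k] by simp
    have "1 \<le> G k" using N[of k] by (cases "G k") auto
    hence "ln (real (N k)) \<le> ln (real (G k) ^ 2)"
      using N[of k] by (subst ln_le_cancel_iff) (auto simp flip: of_nat_power)
    also have "\<dots> = 2 * ln (real (G k))" using \<open>1 \<le> G k\<close> by (simp add: ln_realpow)
    finally have ln_G: "ln (real (N k)) \<le> 2 * ln (real (G k))" .
    have "real (rho k) * a \<le> real (rho k) * (a + 1)" by (simp add: mult_left_mono)
    also have "\<dots> \<le> eps * ln (real (N k)) * (a + 1)"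
      using k ln_N a by (intro mult_right_mono) (auto simp: field_simps)
    also have "\<dots> = ln (real (N k)) / 2" using a by (simp add: eps_def field_simps)
    finally show "real (rho k) * a \<le> ln (real (G k))" using ln_G by simp
  qed
qed

lemma prob_pmf_of_set_eq_1_minus:
  assumes "finite S" "S \<noteq> {}"
  shows "measure_pmf.prob (pmf_of_set S) A = 1 - real (card (S - A)) / real (card S)"
proof -
  have "0 < real (card S)" using assms by (simp add: card_gt_0_iff)
  thus ?thesis
    using assms card_Int_Diff[OF assms(1), of A] by (simp add: measure_pmf_of_set field_simps)
qed

section \<open>Cuts and connectivity\<close>

lemma wf_graph_nth:
  assumes "wf_graph n es" "i < length es"
  shows "fst (es ! i) < n" "snd (es ! i) < n" "fst (es ! i) \<noteq> snd (es ! i)"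
  using assms(1) nth_mem[OF assms(2)] unfolding wf_graph_def by (cases "es ! i"; fastforce)+

lemma adj_on_commute: "(u, v) \<in> adj_on es T \<longleftrightarrow> (v, u) \<in> adj_on es T"
  unfolding adj_on_def by blast

lemma rtrancl_adj_on_sym: "(u, v) \<in> (adj_on es T)\<^sup>* \<Longrightarrow> (v, u) \<in> (adj_on es T)\<^sup>*"
  using sym_rtrancl[of "adj_on es T"] adj_on_commute by (auto simp: sym_def)

lemma path_crosses_cut:
  assumes "(u, v) \<in> (adj_on es T)\<^sup>*" "u \<in> S" "v \<notin> S"
  shows "\<exists>i\<in>T. i \<in> cut_edges es S"
  using assms
proof (induction rule: rtrancl_induct)
  case (step y z)
  show ?case
  proof (cases "y \<in> S")
    case True
    from step(2) obtain i where "i \<in> T" "i < length es" "es ! i = (y, z) \<or> es ! i = (z, y)"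
      unfolding adj_on_def by blast
    thus ?thesis using True step(5) unfolding cut_edges_def by auto
  qed (use step in blast)
qed simp

lemma connected_if_cuts_crossed:
  assumes wf: "wf_graph n es" and T: "T \<subseteq> {..<length es}" and v0: "v0 < n"
    and cuts: "\<And>S. S \<subseteq> {..<n} \<Longrightarrow> v0 \<notin> S \<Longrightarrow> S \<noteq> {} \<Longrightarrow> \<exists>i\<in>T. i \<in> cut_edges es S"
  shows "\<forall>u<n. \<forall>v<n. (u, v) \<in> (adj_on es T)\<^sup>*"
proof -
  define S where "S = {u. u < n \<and> (u, v0) \<notin> (adj_on es T)\<^sup>*}"
  have to_v0: "\<forall>u<n. (u, v0) \<in> (adj_on es T)\<^sup>*"
  proof (rule ccontr)
    assume "\<not> ?thesis"
    hence "S \<subseteq> {..<n}" "v0 \<notin> S" "S \<noteq> {}" by (auto simp: S_def)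
    then obtain i where i: "i \<in> T" "i \<in> cut_edges es S" using cuts by blast
    obtain x y where xy: "es ! i = (x, y)" by fastforce
    have "i < length es" using T i by auto
    hence "x < n" "y < n" "(x, y) \<in> adj_on es T"
      using wf_graph_nth[OF wf, of i] i(1) xy by (auto simp: adj_on_def)
    moreover have "(x \<in> S) \<noteq> (y \<in> S)" using i(2) xy by (simp add: cut_edges_def)
    ultimately show False
      using adj_on_commute[of x y es T] unfolding S_def
      by (auto intro: converse_rtrancl_into_rtrancl)
  qed
  thus ?thesis using rtrancl_adj_on_sym by (meson rtrancl_trans)
qed

section \<open>Uniqueness of the electrical flow\<close>

lemma netflow_diff: "netflow es (\<lambda>v. f v - g v) v = netflow es f v - netflow es g v"
  unfolding netflow_def sum_subtractf[symmetric] by (intro sum.cong) auto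

lemma sum_potential_netflow:
  assumes wf: "wf_graph n es"
  shows "(\<Sum>v<n. psi v * netflow es psi v) =
         (\<Sum>i<length es. (psi (fst (es ! i)) - psi (snd (es ! i)))\<^sup>2)"
proof -
  have "(\<Sum>v<n. psi v * netflow es psi v) = (\<Sum>i<length es. \<Sum>v<n.
      (if fst (es ! i) = v then psi v * (psi v - psi (snd (es ! i))) else 0)
    + (if snd (es ! i) = v then psi v * (psi v - psi (fst (es ! i))) else 0))"
    unfolding netflow_def sum_distrib_left
    by (subst sum.swap) (auto intro!: sum.cong simp: distrib_left)
  also have "\<dots> = (\<Sum>i<length es. (psi (fst (es ! i)) - psi (snd (es ! i)))\<^sup>2)"
  proof (rule sum.cong[OF refl])
    fix i assume "i \<in> {..<length es}"
    hence "fst (es ! i) < n" "snd (es ! i) < n" using wf_graph_nth[OF wf] by auto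
    thus "(\<Sum>v<n. (if fst (es ! i) = v then psi v * (psi v - psi (snd (es ! i))) else 0)
        + (if snd (es ! i) = v then psi v * (psi v - psi (fst (es ! i))) else 0)) =
      (psi (fst (es ! i)) - psi (snd (es ! i)))\<^sup>2"
      by (simp add: sum.distrib power2_eq_square algebra_simps)
  qed
  finally show ?thesis .
qed

text \<open>
  The difference of two solutions has zero energy, hence is constant on the connected graph,
  hence vanishes because both solutions agree at s.
\<close>
lemma netflow_source_unique:
  assumes wf: "wf_graph n es" and conn: "connected_graph n es"
    and s: "s < n" and t: "t < n"
    and phi: "phi s = 1" "phi t = 0" "\<forall>v<n. v \<noteq> s \<and> v \<noteq> t \<longrightarrow> netflow es phi v = 0"
    and phi': "phi' s = 1" "phi' t = 0" "\<forall>v<n. v \<noteq> s \<and> v \<noteq> t \<longrightarrow> netflow es phi' v = 0"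
  shows "netflow es phi s = netflow es phi' s"
proof -
  define psi where "psi v = phi v - phi' v" for v
  have nf: "netflow es psi v = netflow es phi v - netflow es phi' v" for v
    unfolding psi_def by (rule netflow_diff)
  have "(\<Sum>v<n. psi v * netflow es psi v) = 0"
  proof (intro sum.neutral ballI)
    fix v assume "v \<in> {..<n}"
    thus "psi v * netflow es psi v = 0"
      using phi phi' by (cases "v = s \<or> v = t") (auto simp: psi_def nf)
  qed
  hence "(\<Sum>i<length es. (psi (fst (es ! i)) - psi (snd (es ! i)))\<^sup>2) = 0"
    using sum_potential_netflow[OF wf] by simp
  hence edge: "psi (fst (es ! i)) = psi (snd (es ! i))" if "i < length es" for i
    using that by (subst (asm) sum_nonneg_eq_0_iff) auto
  have adjacent_eq: "psi u = psi v" if "(u, v) \<in> adj_on es {..<length es}" for u v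
    using that edge unfolding adj_on_def by (auto, metis fst_conv snd_conv, metis fst_conv snd_conv)
  have reachable_eq: "psi u = psi v" if "(u, v) \<in> (adj_on es {..<length es})\<^sup>*" for u v
    using that by (induction rule: rtrancl_induct) (auto dest: adjacent_eq)
  have zero: "psi u = 0" if "u < n" for u
  proof -
    have "(u, s) \<in> (adj_on es {..<length es})\<^sup>*"
      using conn that s unfolding connected_graph_def by auto
    thus ?thesis using reachable_eq phi(1) phi'(1) by (simp add: psi_def)
  qed
  have "netflow es psi s = 0"
    unfolding netflow_def
  proof (intro sum.neutral ballI)
    fix i assume "i \<in> {..<length es}"
    hence "fst (es ! i) < n" "snd (es ! i) < n" using wf_graph_nth[OF wf] by auto
    thus "(if fst (es ! i) = s then psi s - psi (snd (es ! i)) else 0) +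
          (if snd (es ! i) = s then psi s - psi (fst (es ! i)) else 0) = 0"
      using zero s by auto
  qed
  thus ?thesis using nf by simp
qed

lemma eff_conductance_eqI:
  assumes "wf_graph n es" "connected_graph n es" "s < n" "t < n"
    and "phi s = 1" "phi t = 0" "\<forall>v<n. v \<noteq> s \<and> v \<noteq> t \<longrightarrow> netflow es phi v = 0"
  shows "eff_conductance n es s t = netflow es phi s"
  unfolding eff_conductance_def
  by (rule the_equality) (use assms netflow_source_unique[OF assms(1-4)] in metis)+


section \<open>The gadget graph\<close>

text \<open>
  Vertex 0 is the hub.  In gadget g the local vertex 0 is the root, Suc j (j < m) are the side
  vertices and Suc m is the hub; vertex g l is the global name of local vertex l.  Local edge
  r < m joins the root to Suc r, local edge m + j * K + k is the k-th edge of the bundle joining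
  Suc j to the hub, and global edge h * gadget_size + r is local edge r of gadget h.
\<close>
locale hub_gadgets =
  fixes m K :: nat
  assumes m_pos: "1 \<le> m" and K_pos: "1 \<le> K"
begin

definition gadget_size :: nat where "gadget_size = m + m * K"

definition side_of :: "nat \<Rightarrow> nat" where
  "side_of r = (if r < m then r else (r - m) div K)"

definition local_edge :: "nat \<Rightarrow> nat \<times> nat" where
  "local_edge r = (if r < m then (0, Suc r) else (Suc (side_of r), Suc m))"

definition vertex :: "nat \<Rightarrow> nat \<Rightarrow> nat" where
  "vertex g l = (if l = Suc m then 0 else g * Suc m + 1 + l)"

definition edge :: "nat \<Rightarrow> nat \<times> nat" where
  "edge i = (vertex (i div gadget_size) (fst (local_edge (i mod gadget_size))),
             vertex (i div gadget_size) (snd (local_edge (i mod gadget_size))))"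

definition num_vertices :: "nat \<Rightarrow> nat" where "num_vertices G = Suc (G * Suc m)"

definition edge_list :: "nat \<Rightarrow> (nat \<times> nat) list" where
  "edge_list G = map edge [0..<G * gadget_size]"

lemma num_vertices_pos [simp]: "0 < num_vertices G"
  by (simp add: num_vertices_def)

lemma gadget_size_pos: "0 < gadget_size" using m_pos by (simp add: gadget_size_def)

lemma m_less_gadget_size: "m < gadget_size" using m_pos K_pos by (simp add: gadget_size_def)

lemma length_edge_list [simp]: "length (edge_list G) = G * gadget_size"
  by (simp add: edge_list_def)

lemma nth_edge_list: "i < G * gadget_size \<Longrightarrow> edge_list G ! i = edge i"
  by (simp add: edge_list_def)

lemma edge_index_less: "h < G \<Longrightarrow> r < gadget_size \<Longrightarrow> h * gadget_size + r < G * gadget_size"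
proof -
  assume "h < G" "r < gadget_size"
  hence "h * gadget_size + r < Suc h * gadget_size" by simp
  also have "\<dots> \<le> G * gadget_size" using \<open>h < G\<close> by (intro mult_le_mono1) simp
  finally show ?thesis .
qed

lemma edge_index_eq_iff [simp]:
  assumes "r < gadget_size" "r' < gadget_size"
  shows "g * gadget_size + r = h * gadget_size + r' \<longleftrightarrow> g = h \<and> r = r'"
proof -
  have "(g * gadget_size + r) div gadget_size = g" "(h * gadget_size + r') div gadget_size = h"
       "(g * gadget_size + r) mod gadget_size = r" "(h * gadget_size + r') mod gadget_size = r'"
    using assms by simp_all
  thus ?thesis by metis
qed

lemma edge_index_cases:
  assumes "i < G * gadget_size"
  obtains h r where "h < G" "r < gadget_size" "i = h * gadget_size + r"
proof
  show "i div gadget_size < G" using assms by (simp add: less_mult_imp_div_less)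
  show "i mod gadget_size < gadget_size" using gadget_size_pos by simp
qed (rule div_mult_mod_eq[symmetric])

lemma edge_split:
  "r < gadget_size \<Longrightarrow> edge (h * gadget_size + r) =
     (vertex h (fst (local_edge r)), vertex h (snd (local_edge r)))"
  unfolding edge_def using gadget_size_pos by simp

lemma side_of_less: "r < gadget_size \<Longrightarrow> side_of r < m"
  using K_pos by (auto simp: side_of_def gadget_size_def less_mult_imp_div_less mult.commute)

lemma local_edge_root: "r < m \<Longrightarrow> local_edge r = (0, Suc r)"
  by (simp add: local_edge_def)

lemma local_edge_bundle: "\<not> r < m \<Longrightarrow> local_edge r = (Suc (side_of r), Suc m)"
  by (simp add: local_edge_def)

lemma local_edge_bundle_index: "j < m \<Longrightarrow> k < K \<Longrightarrow> local_edge (m + (j * K + k)) = (Suc j, Suc m)"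
  by (simp add: local_edge_def side_of_def)

lemma local_edge_bounds:
  "r < gadget_size \<Longrightarrow> fst (local_edge r) \<le> m \<and> snd (local_edge r) \<le> Suc m \<and>
     fst (local_edge r) \<noteq> snd (local_edge r)"
  using side_of_less[of r] by (auto simp: local_edge_def)

lemma vertex_nonhub: "l \<le> m \<Longrightarrow> vertex h l = h * Suc m + 1 + l"
  by (simp add: vertex_def)

lemma vertex_hub [simp]: "vertex h (Suc m) = 0"
  by (simp add: vertex_def)

lemma vertex_nonzero [simp]: "l \<le> m \<Longrightarrow> vertex h l \<noteq> 0" "l \<le> m \<Longrightarrow> 0 \<noteq> vertex h l"
  by (simp_all add: vertex_nonhub)

lemma vertex_eq_iff [simp]:
  assumes "l \<le> m" "l' \<le> m"
  shows "vertex h l = vertex h' l' \<longleftrightarrow> h = h' \<and> l = l'"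
proof -
  have divmod: "(a * n + b) div n = a" "(a * n + b) mod n = b" if "b < n" for a b n :: nat
    using that by simp_all
  have "(h * Suc m + l) div Suc m = h" "(h * Suc m + l) mod Suc m = l"
       "(h' * Suc m + l') div Suc m = h'" "(h' * Suc m + l') mod Suc m = l'"
    using assms by (simp_all only: divmod le_imp_less_Suc)
  thus ?thesis using assms by (auto simp: vertex_nonhub)
qed

lemma vertex_less: "h < G \<Longrightarrow> l \<le> Suc m \<Longrightarrow> vertex h l < num_vertices G"
proof -
  assume "h < G" "l \<le> Suc m"
  moreover have "h * Suc m + Suc m \<le> G * Suc m" if "h < G"
    using that by (metis Suc_leI mult_Suc mult_le_mono1 add.commute)
  ultimately show ?thesis by (cases "l = Suc m") (auto simp: num_vertices_def vertex_def)
qed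

lemma num_vertices_le_square: "m + 2 \<le> G \<Longrightarrow> num_vertices G \<le> G\<^sup>2"
proof -
  assume "m + 2 \<le> G"
  hence "G * (m + 2) \<le> G * G" by (rule mult_le_mono2)
  thus ?thesis using \<open>m + 2 \<le> G\<close> by (simp add: num_vertices_def power2_eq_square algebra_simps)
qed

lemma vertex_cases:
  assumes "v < num_vertices G" "v \<noteq> 0"
  obtains h l where "h < G" "l \<le> m" "v = vertex h l"
proof
  show "(v - 1) div Suc m < G" using assms by (simp add: num_vertices_def less_mult_imp_div_less)
  show "(v - 1) mod Suc m \<le> m" by (simp add: less_Suc_eq_le)
  show "v = vertex ((v - 1) div Suc m) ((v - 1) mod Suc m)"
    using assms(2) div_mult_mod_eq[of "v - 1" "Suc m"] by (simp add: vertex_nonhub less_Suc_eq_le)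
qed

lemma wf_edge_list: "wf_graph (num_vertices G) (edge_list G)"
  unfolding wf_graph_def
proof (intro ballI, clarify)
  fix u v assume "(u, v) \<in> set (edge_list G)"
  then obtain i where i: "i < G * gadget_size" "edge_list G ! i = (u, v)"
    by (auto simp: in_set_conv_nth)
  obtain h r where hr: "h < G" "r < gadget_size" "i = h * gadget_size + r"
    using edge_index_cases[OF i(1)] by blast
  have uv: "(u, v) = (vertex h (fst (local_edge r)), vertex h (snd (local_edge r)))"
    using i hr nth_edge_list edge_split by simp
  have "fst (local_edge r) \<le> m" "snd (local_edge r) \<le> Suc m" "fst (local_edge r) \<noteq> snd (local_edge r)"
    using local_edge_bounds[OF hr(2)] by auto
  thus "u < num_vertices G \<and> v < num_vertices G \<and> u \<noteq> v"
    using uv vertex_less[OF hr(1)] by (cases "snd (local_edge r) = Suc m") auto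
qed

section \<open>Spanning trees of the gadget graph\<close>

definition crosses :: "nat set \<Rightarrow> nat set \<Rightarrow> bool" where
  "crosses X S \<longleftrightarrow> (\<exists>r\<in>X. (fst (local_edge r) \<in> S) \<noteq> (snd (local_edge r) \<in> S))"

definition local_trace :: "nat \<Rightarrow> nat set \<Rightarrow> nat set" where
  "local_trace h S = {l. l \<le> m \<and> vertex h l \<in> S}"

definition local_part :: "nat \<Rightarrow> nat set \<Rightarrow> nat set" where
  "local_part g T = {r. r < gadget_size \<and> g * gadget_size + r \<in> T}"

definition glue :: "nat \<Rightarrow> (nat \<Rightarrow> nat set) \<Rightarrow> nat set" where
  "glue G f = {i. i < G * gadget_size \<and> i mod gadget_size \<in> f (i div gadget_size)}"

text \<open>Local cuts are given by their side avoiding the hub Suc m.\<close>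
definition local_trees :: "nat set set" where
  "local_trees = {X. X \<subseteq> {..<gadget_size} \<and> card X = Suc m \<and>
                     (\<forall>S\<subseteq>{..m}. S \<noteq> {} \<longrightarrow> crosses X S)}"

definition star_local_trees :: "nat set set" where
  "star_local_trees = {X \<in> local_trees. {..<m} \<subseteq> X}"

definition standard_local_tree :: "nat set" where
  "standard_local_tree = insert m {..<m}"

lemma crosses_mono: "crosses X S \<Longrightarrow> X \<subseteq> Y \<Longrightarrow> crosses Y S"
  by (auto simp: crosses_def)

lemma crosses_singleton: "crosses {r} S \<longleftrightarrow> (fst (local_edge r) \<in> S) \<noteq> (snd (local_edge r) \<in> S)"
  by (simp add: crosses_def)

lemma cut_edge_iff_crosses:
  assumes "h < G" "r < gadget_size" "0 \<notin> S"
  shows "h * gadget_size + r \<in> cut_edges (edge_list G) S \<longleftrightarrow> crosses {r} (local_trace h S)"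
proof -
  have i: "h * gadget_size + r < G * gadget_size" using edge_index_less assms by blast
  have "edge_list G ! (h * gadget_size + r) = (vertex h (fst (local_edge r)), vertex h (snd (local_edge r)))"
    using nth_edge_list[OF i] edge_split[OF assms(2)] by simp
  moreover have "vertex h l \<in> S \<longleftrightarrow> l \<in> local_trace h S" if "l \<le> Suc m" for l
    using assms(3) that by (cases "l = Suc m") (auto simp: local_trace_def)
  ultimately show ?thesis
    using i local_edge_bounds[OF assms(2)] by (simp add: cut_edges_def crosses_singleton)
qed

lemma connected_if_local_cuts_crossed:
  assumes T: "T \<subseteq> {..<G * gadget_size}"
    and local: "\<And>g S. g < G \<Longrightarrow> S \<subseteq> {..m} \<Longrightarrow> S \<noteq> {} \<Longrightarrow> crosses (local_part g T) S"
  shows "\<forall>u<num_vertices G. \<forall>v<num_vertices G. (u, v) \<in> (adj_on (edge_list G) T)\<^sup>*"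
proof (rule connected_if_cuts_crossed[OF wf_edge_list _ num_vertices_pos])
  show "T \<subseteq> {..<length (edge_list G)}" using T by simp
  fix S assume S: "S \<subseteq> {..<num_vertices G}" "0 \<notin> S" "S \<noteq> {}"
  then obtain v where v: "v \<in> S" "v < num_vertices G" "v \<noteq> 0" by auto
  obtain h l where hl: "h < G" "l \<le> m" "v = vertex h l" using vertex_cases[OF v(2,3)] by blast
  have "local_trace h S \<subseteq> {..m}" "local_trace h S \<noteq> {}"
    using hl v by (auto simp: local_trace_def)
  then obtain r where r: "r \<in> local_part h T" "crosses {r} (local_trace h S)"
    using local[OF hl(1)] unfolding crosses_def by blast
  hence "r < gadget_size" "h * gadget_size + r \<in> T" by (auto simp: local_part_def)
  thus "\<exists>i\<in>T. i \<in> cut_edges (edge_list G) S"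
    using cut_edge_iff_crosses[OF hl(1) _ S(2)] r(2) by blast
qed

lemma local_cut_crossed_if_connected:
  assumes conn: "\<forall>u<num_vertices G. \<forall>v<num_vertices G. (u, v) \<in> (adj_on (edge_list G) T)\<^sup>*"
    and g: "g < G" and S: "S \<subseteq> {..m}" "S \<noteq> {}"
  shows "crosses (local_part g T) S"
proof -
  define S' where "S' = vertex g ` S"
  obtain l where l: "l \<in> S" using S by blast
  have hub: "0 \<notin> S'" using S by (auto simp: S'_def)
  have "vertex g l \<in> S'" using l by (simp add: S'_def)
  moreover have "(vertex g l, 0) \<in> (adj_on (edge_list G) T)\<^sup>*"
    using conn vertex_less[OF g, of l] l S by auto
  ultimately obtain i where i: "i \<in> T" "i \<in> cut_edges (edge_list G) S'"
    using path_crosses_cut hub by blast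
  then obtain h r where hr: "h < G" "r < gadget_size" "i = h * gadget_size + r"
    using edge_index_cases[of i G] by (auto simp: cut_edges_def)
  have trace: "local_trace h S' = (if h = g then S else {})"
    using S by (auto simp: S'_def local_trace_def)
  have "crosses {r} (local_trace h S')"
    using cut_edge_iff_crosses[OF hr(1,2) hub] i(2) hr(3) by simp
  moreover from this have "h = g" using trace by (cases "h = g") (auto simp: crosses_singleton)
  ultimately show ?thesis using trace hr i(1) unfolding crosses_def local_part_def by auto
qed

lemma card_eq_sum_local_parts:
  assumes T: "T \<subseteq> {..<G * gadget_size}"
  shows "card T = (\<Sum>g<G. card (local_part g T))"
proof -
  let ?shift = "\<lambda>g r. g * gadget_size + r"
  have T_eq: "T = (\<Union>g<G. ?shift g ` local_part g T)"
  proof (intro equalityI subsetI)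
    fix i assume i: "i \<in> T"
    then obtain h r where "h < G" "r < gadget_size" "i = h * gadget_size + r"
      using T edge_index_cases[of i G] by blast
    thus "i \<in> (\<Union>g<G. ?shift g ` local_part g T)" using i by (auto simp: local_part_def)
  qed (auto simp: local_part_def)
  have "card T = (\<Sum>g<G. card (?shift g ` local_part g T))"
  proof (subst T_eq, rule card_UN_disjoint)
    show "\<forall>g\<in>{..<G}. \<forall>h\<in>{..<G}. g \<noteq> h \<longrightarrow> ?shift g ` local_part g T \<inter> ?shift h ` local_part h T = {}"
      by (auto simp: local_part_def)
  qed (auto simp: local_part_def)
  also have "\<dots> = (\<Sum>g<G. card (local_part g T))"
    by (intro sum.cong refl card_image) (auto simp: inj_on_def)
  finally show ?thesis .
qed

lemma local_part_glue:
  assumes "g < G" "f g \<subseteq> {..<gadget_size}"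
  shows "local_part g (glue G f) = f g"
  using assms edge_index_less[OF assms(1)] by (auto simp: local_part_def glue_def)

lemma glue_local_part:
  assumes "T \<subseteq> {..<G * gadget_size}"
  shows "glue G (\<lambda>g. local_part g T) = T"
proof -
  have "i mod gadget_size < gadget_size \<and> (i div gadget_size) * gadget_size + i mod gadget_size = i" for i
    using gadget_size_pos div_mult_mod_eq[of i gadget_size] by simp
  thus ?thesis using assms by (auto simp: local_part_def glue_def)
qed

lemma crosses_side_singleton:
  assumes "crosses X {Suc j}" "j < m"
  shows "\<exists>r\<in>X. side_of r = j"
proof -
  obtain r where r: "r \<in> X" "crosses {r} {Suc j}"
    using assms(1) by (auto simp: crosses_def)
  hence "side_of r = j"
    using assms(2) by (cases "r < m") (auto simp: crosses_singleton local_edge_def side_of_def)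
  thus ?thesis using r by blast
qed

lemma card_eq_sum_sides:
  assumes "X \<subseteq> {..<gadget_size}"
  shows "card X = (\<Sum>j<m. card {r\<in>X. side_of r = j})"
proof -
  have "X = (\<Union>j<m. {r\<in>X. side_of r = j})" using assms side_of_less by auto
  hence "card X = card (\<Union>j<m. {r\<in>X. side_of r = j})" by simp
  also have "\<dots> = (\<Sum>j<m. card {r\<in>X. side_of r = j})"
    using finite_subset[OF assms] by (intro card_UN_disjoint) auto
  finally show ?thesis .
qed

text \<open>
  Let S be the root together with the side vertices joined to it by root edges in X.  Only a
  bundle edge at some side vertex Suc j in S can cross S, and then side j owns two edges of X:
  that bundle edge and root edge j.
\<close>
lemma crosses_all_imp_double_side:
  assumes X: "X \<subseteq> {..<gadget_size}" and cut: "\<And>S. S \<subseteq> {..m} \<Longrightarrow> S \<noteq> {} \<Longrightarrow> crosses X S"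
    and single: "\<And>j. j < m \<Longrightarrow> card {r\<in>X. side_of r = j} \<le> 1"
  shows False
proof -
  define S where "S = insert 0 (Suc ` {j. j < m \<and> j \<in> X})"
  have "S \<subseteq> {..m}" "S \<noteq> {}" by (auto simp: S_def)
  then obtain r where r: "r \<in> X" "crosses {r} S"
    using cut unfolding crosses_def by blast
  have "\<not> r < m" using r by (auto simp: crosses_singleton local_edge_root S_def)
  hence j: "side_of r < m" "side_of r \<noteq> r" using side_of_less[of r] X r(1) by auto
  have "Suc m \<notin> S" by (auto simp: S_def)
  hence "side_of r \<in> X" using r \<open>\<not> r < m\<close> j by (auto simp: crosses_singleton local_edge_bundle S_def)
  hence "{side_of r, r} \<subseteq> {r'\<in>X. side_of r' = side_of r}"
    using r(1) j by (auto simp: side_of_def)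
  moreover have "finite X" using X finite_subset by blast
  ultimately have "2 \<le> card {r'\<in>X. side_of r' = side_of r}"
    using j by (metis (no_types, lifting) card_2_iff card_mono finite_subset mem_Collect_eq subsetI)
  thus False using single[OF j(1)] by simp
qed

lemma card_ge_if_crosses_all:
  assumes X: "X \<subseteq> {..<gadget_size}" and cut: "\<And>S. S \<subseteq> {..m} \<Longrightarrow> S \<noteq> {} \<Longrightarrow> crosses X S"
  shows "Suc m \<le> card X"
proof -
  have fin: "finite X" using X finite_subset by blast
  have one: "1 \<le> card {r\<in>X. side_of r = j}" if "j < m" for j
  proof -
    have "crosses X {Suc j}" using that by (intro cut) auto
    thus ?thesis using crosses_side_singleton[OF _ that] fin by (auto simp: Suc_le_eq card_gt_0_iff)
  qed
  have "\<exists>j<m. 2 \<le> card {r\<in>X. side_of r = j}"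
  proof (rule ccontr)
    assume "\<not> ?thesis"
    thus False using crosses_all_imp_double_side[OF X cut] by force
  qed
  then obtain j0 where j0: "j0 < m" "2 \<le> card {r\<in>X. side_of r = j0}" by blast
  have "card X = card {r\<in>X. side_of r = j0} + (\<Sum>j\<in>{..<m} - {j0}. card {r\<in>X. side_of r = j})"
    using j0 card_eq_sum_sides[OF X] by (simp add: sum.remove)
  also have "\<dots> \<ge> 2 + (\<Sum>j\<in>{..<m} - {j0}. 1)"
    using j0 one by (intro add_mono sum_mono) auto
  finally show ?thesis using j0 by simp
qed

lemma crosses_standard_local_tree:
  assumes "S \<subseteq> {..m}" "S \<noteq> {}"
  shows "crosses standard_local_tree S"
proof (cases "0 \<in> S")
  case True
  show ?thesis
  proof (cases "\<exists>j<m. Suc j \<notin> S")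
    case True
    then obtain j where "j < m" "Suc j \<notin> S" by blast
    thus ?thesis using \<open>0 \<in> S\<close> unfolding crosses_def standard_local_tree_def
      by (intro bexI[of _ j]) (auto simp: local_edge_root)
  next
    case False
    hence "Suc 0 \<in> S" using m_pos by auto
    moreover have "Suc m \<notin> S" using assms by auto
    moreover have "local_edge m = (Suc 0, Suc m)" by (simp add: local_edge_def side_of_def)
    ultimately show ?thesis unfolding crosses_def standard_local_tree_def
      by (intro bexI[of _ m]) auto
  qed
next
  case False
  obtain l where l: "l \<in> S" using assms by blast
  then obtain j where j: "l = Suc j" using False by (cases l) auto
  have "j < m" using l j assms by auto
  thus ?thesis using l j False unfolding crosses_def standard_local_tree_def
    by (intro bexI[of _ j]) (auto simp: local_edge_root)
qed

lemma standard_local_tree_in_star_local_trees: "standard_local_tree \<in> star_local_trees"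
  using m_less_gadget_size crosses_standard_local_tree
  by (auto simp: star_local_trees_def local_trees_def standard_local_tree_def)

lemma finite_local_trees: "finite local_trees"
  by (rule finite_subset[of _ "Pow {..<gadget_size}"]) (auto simp: local_trees_def)

lemma star_local_trees_subset: "star_local_trees \<subseteq> local_trees"
  by (auto simp: star_local_trees_def)

text \<open>
  A spanning tree has G (m + 1) edges, one per non-hub vertex, and each gadget part needs at
  least m + 1 edges to keep its gadget connected; so every part has exactly m + 1 edges.
\<close>
lemma spanning_tree_iff_local_parts:
  "T \<in> spanning_trees (num_vertices G) (edge_list G) \<longleftrightarrow>
     T \<subseteq> {..<G * gadget_size} \<and> (\<forall>g<G. local_part g T \<in> local_trees)"
proof
  assume "T \<in> spanning_trees (num_vertices G) (edge_list G)"
  hence T: "T \<subseteq> {..<G * gadget_size}" "card T + 1 = num_vertices G"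
    and conn: "\<forall>u<num_vertices G. \<forall>v<num_vertices G. (u, v) \<in> (adj_on (edge_list G) T)\<^sup>*"
    by (auto simp: spanning_trees_def is_spanning_tree_def)
  have cuts: "crosses (local_part g T) S" if "g < G" "S \<subseteq> {..m}" "S \<noteq> {}" for g S
    using local_cut_crossed_if_connected[OF conn that] .
  have part_sub: "local_part g T \<subseteq> {..<gadget_size}" for g by (auto simp: local_part_def)
  have "(\<Sum>g<G. card (local_part g T)) = card {..<G} * Suc m"
    using card_eq_sum_local_parts[OF T(1)] T(2) by (simp add: num_vertices_def)
  hence "card (local_part g T) = Suc m" if "g < G" for g
    using sum_eq_card_mult_imp_eq[of "{..<G}" "Suc m" "\<lambda>g. card (local_part g T)" g]
      card_ge_if_crosses_all[OF part_sub cuts] that by auto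
  thus "T \<subseteq> {..<G * gadget_size} \<and> (\<forall>g<G. local_part g T \<in> local_trees)"
    using T(1) cuts part_sub by (auto simp: local_trees_def)
next
  assume parts: "T \<subseteq> {..<G * gadget_size} \<and> (\<forall>g<G. local_part g T \<in> local_trees)"
  have "card T = (\<Sum>g<G. card (local_part g T))"
    using parts card_eq_sum_local_parts by blast
  also have "\<dots> = (\<Sum>g<G. Suc m)"
    using parts by (intro sum.cong) (auto simp: local_trees_def)
  finally have "card T + 1 = num_vertices G" by (simp add: num_vertices_def)
  moreover have "\<forall>u<num_vertices G. \<forall>v<num_vertices G. (u, v) \<in> (adj_on (edge_list G) T)\<^sup>*"
    using parts by (intro connected_if_local_cuts_crossed) (auto simp: local_trees_def)
  ultimately show "T \<in> spanning_trees (num_vertices G) (edge_list G)"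
    using parts by (auto simp: spanning_trees_def is_spanning_tree_def)
qed

lemma connected_edge_list: "connected_graph (num_vertices G) (edge_list G)"
proof -
  have "local_part g {..<G * gadget_size} = {..<gadget_size}" if "g < G" for g
    using edge_index_less[OF that] by (auto simp: local_part_def)
  hence "\<forall>u<num_vertices G. \<forall>v<num_vertices G. (u, v) \<in> (adj_on (edge_list G) {..<G * gadget_size})\<^sup>*"
    using crosses_mono[OF crosses_standard_local_tree] standard_local_tree_in_star_local_trees
    by (intro connected_if_local_cuts_crossed)
       (auto simp: star_local_trees_def local_trees_def)
  thus ?thesis by (simp add: connected_graph_def num_vertices_def)
qed

definition local_parts :: "nat \<Rightarrow> nat set \<Rightarrow> nat \<Rightarrow> nat set" where
  "local_parts G T = (\<lambda>g. if g < G then local_part g T else {})"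

lemma spanning_tree_eq_if_local_parts_eq:
  assumes "T \<in> spanning_trees (num_vertices G) (edge_list G)"
    and "T' \<in> spanning_trees (num_vertices G) (edge_list G)"
    and "\<And>g. g < G \<Longrightarrow> local_part g T = local_part g T'"
  shows "T = T'"
proof -
  have "i div gadget_size < G" if "i < G * gadget_size" for i
    using that by (simp add: less_mult_imp_div_less)
  hence "glue G (\<lambda>g. local_part g T) = glue G (\<lambda>g. local_part g T')"
    using assms(3) by (auto simp: glue_def)
  thus ?thesis using assms(1,2) glue_local_part spanning_tree_iff_local_parts by metis
qed

lemma bij_betw_local_parts:
  "bij_betw (local_parts G) (spanning_trees (num_vertices G) (edge_list G))
     (PiE_dflt {..<G} {} (\<lambda>_. local_trees))"
proof (rule bij_betw_imageI)
  show "inj_on (local_parts G) (spanning_trees (num_vertices G) (edge_list G))"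
  proof (rule inj_onI)
    fix T T' assume T: "T \<in> spanning_trees (num_vertices G) (edge_list G)"
      "T' \<in> spanning_trees (num_vertices G) (edge_list G)" and eq: "local_parts G T = local_parts G T'"
    have "local_part g T = local_part g T'" if "g < G" for g
      using fun_cong[OF eq, of g] that by (simp add: local_parts_def)
    thus "T = T'" using T by (rule spanning_tree_eq_if_local_parts_eq[rotated 2])
  qed
  show "local_parts G ` spanning_trees (num_vertices G) (edge_list G) = PiE_dflt {..<G} {} (\<lambda>_. local_trees)"
  proof (intro equalityI subsetI)
    fix f assume "f \<in> local_parts G ` spanning_trees (num_vertices G) (edge_list G)"
    then obtain T where "T \<in> spanning_trees (num_vertices G) (edge_list G)" "f = local_parts G T" by blast
    thus "f \<in> PiE_dflt {..<G} {} (\<lambda>_. local_trees)"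
      unfolding spanning_tree_iff_local_parts PiE_dflt_def local_parts_def by simp
  next
    fix f assume "f \<in> PiE_dflt {..<G} {} (\<lambda>_. local_trees)"
    hence f: "\<And>g. g < G \<Longrightarrow> f g \<in> local_trees" "\<And>g. \<not> g < G \<Longrightarrow> f g = {}"
      by (simp_all add: PiE_dflt_def)
    have parts: "local_part g (glue G f) = f g" if "g < G" for g
      using that f(1)[OF that] by (intro local_part_glue) (simp_all add: local_trees_def)
    have "glue G f \<in> spanning_trees (num_vertices G) (edge_list G)"
      unfolding spanning_tree_iff_local_parts using parts f(1) by (auto simp: glue_def)
    moreover have "f = local_parts G (glue G f)"
      using parts f(2) by (auto simp: local_parts_def fun_eq_iff)
    ultimately show "f \<in> local_parts G ` spanning_trees (num_vertices G) (edge_list G)" by blast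
  qed
qed

lemma card_spanning_trees: "card (spanning_trees (num_vertices G) (edge_list G)) = card local_trees ^ G"
  using bij_betw_same_card[OF bij_betw_local_parts] finite_local_trees by (simp add: card_PiE_dflt)

lemma card_local_trees_pos: "0 < card local_trees"
  using standard_local_tree_in_star_local_trees star_local_trees_subset finite_local_trees
  by (auto simp: card_gt_0_iff)

lemma finite_spanning_trees: "finite (spanning_trees (num_vertices G) (edge_list G))"
  using card_spanning_trees card_local_trees_pos by (metis card.infinite gr_implies_not0 power_not_zero)

lemma spanning_trees_nonempty: "spanning_trees (num_vertices G) (edge_list G) \<noteq> {}"
  using card_spanning_trees card_local_trees_pos by (metis card.empty gr_implies_not0 power_not_zero)

definition star_fraction :: real where
  "star_fraction = real (card star_local_trees) / real (card local_trees)"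

lemma star_fraction_pos: "0 < star_fraction"
proof -
  have "0 < card star_local_trees"
    using standard_local_tree_in_star_local_trees finite_subset[OF star_local_trees_subset finite_local_trees]
    by (auto simp: card_gt_0_iff)
  thus ?thesis using card_local_trees_pos by (simp add: star_fraction_def)
qed

lemma star_fraction_le_1: "star_fraction \<le> 1"
  using card_local_trees_pos card_mono[OF finite_local_trees star_local_trees_subset]
  by (simp add: star_fraction_def)

section \<open>Effective conductance of the root edges\<close>

definition edge_outflow :: "(nat \<Rightarrow> real) \<Rightarrow> nat \<Rightarrow> nat \<Rightarrow> nat \<Rightarrow> real" where
  "edge_outflow phi v u w = (if u = v then phi v - phi w else 0) + (if w = v then phi v - phi u else 0)"

lemma netflow_edge_list:
  "netflow (edge_list G) phi v =
     (\<Sum>h<G. \<Sum>j<m. edge_outflow phi v (vertex h 0) (vertex h (Suc j))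
                    + real K * edge_outflow phi v (vertex h (Suc j)) 0)"
proof -
  let ?out = "\<lambda>h r. edge_outflow phi v (vertex h (fst (local_edge r))) (vertex h (snd (local_edge r)))"
  have "netflow (edge_list G) phi v = (\<Sum>i<G * gadget_size. edge_outflow phi v (fst (edge i)) (snd (edge i)))"
    unfolding netflow_def edge_outflow_def by (intro sum.cong) (auto simp: nth_edge_list)
  also have "\<dots> = (\<Sum>h<G. \<Sum>r<gadget_size. ?out h r)"
    by (simp add: sum_lessThan_mult edge_split)
  also have "\<dots> = (\<Sum>h<G. \<Sum>j<m. edge_outflow phi v (vertex h 0) (vertex h (Suc j))
                    + real K * edge_outflow phi v (vertex h (Suc j)) 0)"
  proof (rule sum.cong[OF refl])
    fix h
    have "(\<Sum>r<gadget_size. ?out h r) = (\<Sum>r<m. ?out h r) + (\<Sum>j<m. \<Sum>k<K. ?out h (m + (j * K + k)))"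
      unfolding gadget_size_def sum_lessThan_add sum_lessThan_mult ..
    also have "\<dots> = (\<Sum>j<m. edge_outflow phi v (vertex h 0) (vertex h (Suc j)))
                   + (\<Sum>j<m. real K * edge_outflow phi v (vertex h (Suc j)) 0)"
      by (simp add: local_edge_root local_edge_bundle_index)
    finally show "(\<Sum>r<gadget_size. ?out h r) = (\<Sum>j<m. edge_outflow phi v (vertex h 0) (vertex h (Suc j))
                    + real K * edge_outflow phi v (vertex h (Suc j)) 0)"
      by (simp add: sum.distrib)
  qed
  finally show ?thesis .
qed

text \<open>
  Unit voltage across the root edge r of gadget g: the hub and all other gadgets sit at
  hub_potential and the other side vertices of gadget g at side_potential, the two values being
  forced by Kirchhoff's law at the hub and at a side vertex.
\<close>
definition hub_potential :: real where
  "hub_potential = (real m - 1) / (real m + real K)"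

definition side_potential :: real where
  "side_potential = (1 + real K * hub_potential) / (1 + real K)"

definition root_edge_potential :: "nat \<Rightarrow> nat \<Rightarrow> nat \<Rightarrow> real" where
  "root_edge_potential g r v =
     (if v = vertex g 0 then 1 else if v = vertex g (Suc r) then 0
      else if \<exists>j<m. v = vertex g (Suc j) then side_potential else hub_potential)"

definition root_edge_conductance :: real where
  "root_edge_conductance = real m * (real K + 1) / (real m + real K)"

lemma root_edge_potential_root:
  "r < m \<Longrightarrow> root_edge_potential g r (vertex h 0) = (if h = g then 1 else hub_potential)"
  by (auto simp: root_edge_potential_def)

lemma root_edge_potential_side:
  "j < m \<Longrightarrow> r < m \<Longrightarrow> root_edge_potential g r (vertex h (Suc j)) =
     (if h = g then (if j = r then 0 else side_potential) else hub_potential)"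
  by (auto simp: root_edge_potential_def)

lemma root_edge_potential_hub: "r < m \<Longrightarrow> root_edge_potential g r 0 = hub_potential"
  by (auto simp: root_edge_potential_def)

lemma hub_potential_eq: "hub_potential * (real m + real K) = real m - 1"
  using m_pos by (simp add: hub_potential_def)

lemma side_potential_eq: "side_potential * (1 + real K) = 1 + real K * hub_potential"
  by (simp add: side_potential_def add_pos_pos)

lemma netflow_root_edge_potential_hub:
  assumes g: "g < G" and r: "r < m"
  shows "netflow (edge_list G) (root_edge_potential g r) 0 = 0"
proof -
  let ?x = hub_potential and ?y = side_potential
  have "netflow (edge_list G) (root_edge_potential g r) 0 =
      (\<Sum>h<G. \<Sum>j<m. if h = g then real K * (if j = r then ?x else ?x - ?y) else 0)"
    unfolding netflow_edge_list using r
    by (intro sum.cong refl) (simp add: edge_outflow_def root_edge_potential_side root_edge_potential_hub Suc_leI)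
  also have "\<dots> = (\<Sum>h<G. if h = g then (\<Sum>j<m. real K * (if j = r then ?x else ?x - ?y)) else 0)"
    by (intro sum.cong refl) auto
  also have "\<dots> = real K * (?x + (real m - 1) * (?x - ?y))"
    using g by (simp add: sum_distrib_left[symmetric] sum_lessThan_if_eq[OF r])
  also have "\<dots> = 0"
  proof -
    have "(?x + (real m - 1) * (?x - ?y)) * (1 + real K) = 0"
      using hub_potential_eq side_potential_eq by (simp add: algebra_simps)
    thus ?thesis by simp
  qed
  finally show ?thesis .
qed

lemma netflow_root_edge_potential_other_root:
  assumes "h \<noteq> g" and r: "r < m"
  shows "netflow (edge_list G) (root_edge_potential g r) (vertex h 0) = 0"
  unfolding netflow_edge_list using assms
  by (intro sum.neutral ballI)
     (simp add: edge_outflow_def root_edge_potential_side root_edge_potential_root Suc_leI)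

lemma netflow_root_edge_potential_side:
  assumes j: "j < m" and r: "r < m" and ne: "\<not> (h = g \<and> j = r)"
  shows "netflow (edge_list G) (root_edge_potential g r) (vertex h (Suc j)) = 0"
proof -
  let ?phi = "root_edge_potential g r"
  have kirchhoff: "(?phi (vertex h (Suc j)) - ?phi (vertex h 0)) + real K * (?phi (vertex h (Suc j)) - hub_potential) = 0"
    using j r ne side_potential_eq
    by (cases "h = g") (auto simp: root_edge_potential_root root_edge_potential_side algebra_simps)
  have "edge_outflow ?phi (vertex h (Suc j)) (vertex h' 0) (vertex h' (Suc j'))
      + real K * edge_outflow ?phi (vertex h (Suc j)) (vertex h' (Suc j')) 0 = 0" if "j' < m" for h' j'
    using that j r kirchhoff
    by (cases "h' = h \<and> j' = j") (auto simp: edge_outflow_def root_edge_potential_hub Suc_leI algebra_simps)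
  thus ?thesis unfolding netflow_edge_list by (intro sum.neutral ballI) simp
qed

lemma netflow_root_edge_potential_source:
  assumes g: "g < G" and r: "r < m"
  shows "netflow (edge_list G) (root_edge_potential g r) (vertex g 0) = root_edge_conductance"
proof -
  let ?y = side_potential
  have "netflow (edge_list G) (root_edge_potential g r) (vertex g 0) =
     (\<Sum>h<G. \<Sum>j<m. if h = g then (if j = r then 1 else 1 - ?y) else 0)"
    unfolding netflow_edge_list using r
    by (intro sum.cong refl) (simp add: edge_outflow_def root_edge_potential_side root_edge_potential_root Suc_leI)
  also have "\<dots> = (\<Sum>h<G. if h = g then (\<Sum>j<m. if j = r then 1 else 1 - ?y) else 0)"
    by (intro sum.cong refl) auto
  also have "\<dots> = 1 + (real m - 1) * (1 - ?y)"
    using g by (simp add: sum_lessThan_if_eq[OF r])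
  also have "\<dots> = root_edge_conductance"
  proof -
    have p: "0 < real m + real K" using m_pos by simp
    have x: "1 - hub_potential = (1 + real K) / (real m + real K)"
      using p by (simp add: hub_potential_def field_simps)
    have "1 - ?y = real K * (1 - hub_potential) / (1 + real K)"
      by (simp add: side_potential_def field_simps)
    also have "\<dots> = real K / (real m + real K)"
      unfolding x by (simp add: add_pos_pos)
    finally show ?thesis using p by (simp add: root_edge_conductance_def field_simps)
  qed
  finally show ?thesis .
qed

lemma edge_list_root_edge:
  "g < G \<Longrightarrow> r < m \<Longrightarrow> edge_list G ! (g * gadget_size + r) = (vertex g 0, vertex g (Suc r))"
  using nth_edge_list[OF edge_index_less[of g G r]] edge_split[of r g] m_less_gadget_size
  by (simp add: local_edge_root)

lemma edge_conductance_root_edge: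
  assumes g: "g < G" and r: "r < m"
  shows "edge_conductance (num_vertices G) (edge_list G) (g * gadget_size + r) = root_edge_conductance"
proof -
  have "edge_conductance (num_vertices G) (edge_list G) (g * gadget_size + r) =
      netflow (edge_list G) (root_edge_potential g r) (vertex g 0)"
    unfolding edge_conductance_def edge_list_root_edge[OF assms] fst_conv snd_conv
  proof (rule eff_conductance_eqI[OF wf_edge_list connected_edge_list])
    show "vertex g 0 < num_vertices G" "vertex g (Suc r) < num_vertices G"
      using vertex_less[OF g] r by auto
    show "root_edge_potential g r (vertex g 0) = 1" "root_edge_potential g r (vertex g (Suc r)) = 0"
      using r by (simp_all add: root_edge_potential_root root_edge_potential_side)
    show "\<forall>v<num_vertices G. v \<noteq> vertex g 0 \<and> v \<noteq> vertex g (Suc r) \<longrightarrow>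
            netflow (edge_list G) (root_edge_potential g r) v = 0"
    proof (intro allI impI)
      fix v assume v: "v < num_vertices G" "v \<noteq> vertex g 0 \<and> v \<noteq> vertex g (Suc r)"
      show "netflow (edge_list G) (root_edge_potential g r) v = 0"
      proof (cases "v = 0")
        case False
        then obtain h l where hl: "h < G" "l \<le> m" "v = vertex h l" using vertex_cases v(1) by blast
        show ?thesis
        proof (cases l)
          case 0
          thus ?thesis using v hl netflow_root_edge_potential_other_root[OF _ r] by auto
        next
          case (Suc j)
          hence "j < m" "\<not> (h = g \<and> j = r)" using hl v by auto
          thus ?thesis using hl Suc netflow_root_edge_potential_side[OF _ r] by simp
        qed
      qed (use netflow_root_edge_potential_hub[OF g r] in simp)
    qed
  qed
  thus ?thesis using netflow_root_edge_potential_source[OF assms] by simp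
qed

lemma cut_edges_root:
  assumes g: "g < G"
  shows "cut_edges (edge_list G) {vertex g 0} = (\<lambda>r. g * gadget_size + r) ` {..<m}"
proof (intro equalityI subsetI)
  have hub: "0 \<notin> {vertex g 0}" by simp
  have trace: "local_trace h {vertex g 0} = (if h = g then {0} else {})" for h
    by (auto simp: local_trace_def)
  fix i assume i: "i \<in> cut_edges (edge_list G) {vertex g 0}"
  then obtain h r where hr: "h < G" "r < gadget_size" "i = h * gadget_size + r"
    using edge_index_cases[of i G] by (auto simp: cut_edges_def)
  hence "crosses {r} (if h = g then {0} else {})"
    using cut_edge_iff_crosses[OF hr(1,2) hub] i trace by simp
  hence "h = g" "r < m"
    by (auto simp: crosses_singleton local_edge_def split: if_splits)
  thus "i \<in> (\<lambda>r. g * gadget_size + r) ` {..<m}" using hr by auto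
next
  fix i assume "i \<in> (\<lambda>r. g * gadget_size + r) ` {..<m}"
  then obtain r where r: "r < m" "i = g * gadget_size + r" by auto
  thus "i \<in> cut_edges (edge_list G) {vertex g 0}"
    using edge_index_less[OF g, of r] m_less_gadget_size edge_list_root_edge[OF g r(1)]
    by (simp add: cut_edges_def)
qed

section \<open>Sampling spanning trees\<close>

definition root_star :: "nat \<Rightarrow> nat set" where
  "root_star g = (\<lambda>r. g * gadget_size + r) ` {..<m}"

lemma bad_cut_approx_if_root_star_always_sampled:
  assumes g: "g < G" and rho: "1 \<le> rho" and c: "c < root_edge_conductance"
    and star: "\<forall>j<rho. root_star g \<subseteq> Ts j"
  shows "bad_cut_approx c (num_vertices G) (edge_list G) rho Ts"
  unfolding bad_cut_approx_def
proof (intro exI[of _ "{vertex g 0}"] conjI disjI1)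
  show "{vertex g 0} \<subseteq> {..<num_vertices G}" using vertex_less[OF g] by simp
  let ?cut = "cut_edges (edge_list G) {vertex g 0}"
  have card: "card ?cut = m"
    unfolding cut_edges_root[OF g] by (subst card_image) (auto simp: inj_on_def)
  have "sample_weight (num_vertices G) (edge_list G) rho Ts i = root_edge_conductance" if i: "i \<in> ?cut" for i
  proof -
    obtain r where r: "r < m" "i = g * gadget_size + r" using i cut_edges_root[OF g] by auto
    hence "{j. j < rho \<and> i \<in> Ts j} = {..<rho}" using star by (auto simp: root_star_def)
    thus ?thesis using rho edge_conductance_root_edge[OF g r(1)] r(2) by (simp add: sample_weight_def)
  qed
  hence "(\<Sum>i\<in>?cut. sample_weight (num_vertices G) (edge_list G) rho Ts i) = real m * root_edge_conductance"
    using card by simp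
  moreover have "c * real m < real m * root_edge_conductance" using c m_pos by (simp add: mult.commute)
  ultimately show "c * real (card ?cut) < (\<Sum>i\<in>?cut. sample_weight (num_vertices G) (edge_list G) rho Ts i)"
    using card by simp
qed

lemma root_star_subset_iff:
  assumes "g < G" "T \<subseteq> {..<G * gadget_size}"
  shows "root_star g \<subseteq> T \<longleftrightarrow> {..<m} \<subseteq> local_part g T"
  using assms m_less_gadget_size edge_index_less[OF assms(1)] by (auto simp: root_star_def local_part_def)

definition round_parts :: "nat \<Rightarrow> nat \<Rightarrow> (nat \<Rightarrow> nat set) \<Rightarrow> nat \<Rightarrow> nat \<Rightarrow> nat set" where
  "round_parts G rho Ts =
     (\<lambda>g. if g < G then (\<lambda>j. if j < rho then local_part g (Ts j) else {}) else (\<lambda>_. {}))"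

lemma card_non_star_rounds:
  "card (PiE_dflt {..<rho} {} (\<lambda>_. local_trees) - PiE_dflt {..<rho} {} (\<lambda>_. star_local_trees))
     = card local_trees ^ rho - card star_local_trees ^ rho"
proof -
  have fin: "finite star_local_trees"
    using finite_subset[OF star_local_trees_subset finite_local_trees] .
  have "PiE_dflt {..<rho} {} (\<lambda>_. star_local_trees) \<subseteq> PiE_dflt {..<rho} {} (\<lambda>_. local_trees)"
    using star_local_trees_subset by (auto simp: PiE_dflt_def)
  thus ?thesis using fin finite_local_trees by (simp add: card_Diff_subset card_PiE_dflt finite_PiE_dflt)
qed

lemma inj_on_round_parts:
  "inj_on (round_parts G rho) (PiE_dflt {..<rho} {} (\<lambda>_. spanning_trees (num_vertices G) (edge_list G)))"
proof (rule inj_onI, rule ext)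
  fix Ts Ts' j
  assume Ts: "Ts \<in> PiE_dflt {..<rho} {} (\<lambda>_. spanning_trees (num_vertices G) (edge_list G))"
    "Ts' \<in> PiE_dflt {..<rho} {} (\<lambda>_. spanning_trees (num_vertices G) (edge_list G))"
    and eq: "round_parts G rho Ts = round_parts G rho Ts'"
  show "Ts j = Ts' j"
  proof (cases "j < rho")
    case True
    have "Ts j \<in> spanning_trees (num_vertices G) (edge_list G)"
      "Ts' j \<in> spanning_trees (num_vertices G) (edge_list G)" using Ts True by (auto simp: PiE_dflt_def)
    moreover have "local_part g (Ts j) = local_part g (Ts' j)" if "g < G" for g
      using fun_cong[OF fun_cong[OF eq, of g], of j] that True by (simp add: round_parts_def)
    ultimately show ?thesis by (rule spanning_tree_eq_if_local_parts_eq)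
  qed (use Ts in \<open>auto simp: PiE_dflt_def\<close>)
qed

lemma round_parts_if_root_stars_missing:
  assumes Ts: "Ts \<in> PiE_dflt {..<rho} {} (\<lambda>_. spanning_trees (num_vertices G) (edge_list G))"
    and missing: "\<forall>g<G. \<exists>j<rho. \<not> root_star g \<subseteq> Ts j"
  shows "round_parts G rho Ts \<in> PiE_dflt {..<G} (\<lambda>_. {})
           (\<lambda>_. PiE_dflt {..<rho} {} (\<lambda>_. local_trees) - PiE_dflt {..<rho} {} (\<lambda>_. star_local_trees))"
proof -
  have tree: "Ts j \<subseteq> {..<G * gadget_size} \<and> (\<forall>g<G. local_part g (Ts j) \<in> local_trees)" if "j < rho" for j
    using Ts that unfolding PiE_dflt_def spanning_tree_iff_local_parts by blast
  have "round_parts G rho Ts g \<in> PiE_dflt {..<rho} {} (\<lambda>_. local_trees)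
          - PiE_dflt {..<rho} {} (\<lambda>_. star_local_trees)" if g: "g < G" for g
  proof -
    obtain j where j: "j < rho" "\<not> root_star g \<subseteq> Ts j" using missing g by blast
    hence "local_part g (Ts j) \<notin> star_local_trees"
      using root_star_subset_iff[OF g] tree[OF j(1)] by (simp add: star_local_trees_def)
    hence "round_parts G rho Ts g \<notin> PiE_dflt {..<rho} {} (\<lambda>_. star_local_trees)"
      using g j(1) unfolding round_parts_def PiE_dflt_def by auto
    moreover have "round_parts G rho Ts g \<in> PiE_dflt {..<rho} {} (\<lambda>_. local_trees)"
      using g tree unfolding round_parts_def PiE_dflt_def by simp
    ultimately show ?thesis by blast
  qed
  thus ?thesis unfolding PiE_dflt_def[of "{..<G}"] by (simp add: round_parts_def)
qed

lemma card_samples_missing_root_stars: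
  "card (PiE_dflt {..<rho} {} (\<lambda>_. spanning_trees (num_vertices G) (edge_list G))
           \<inter> {Ts. \<forall>g<G. \<exists>j<rho. \<not> root_star g \<subseteq> Ts j})
     \<le> (card local_trees ^ rho - card star_local_trees ^ rho) ^ G"
proof -
  let ?B = "PiE_dflt {..<rho} {} (\<lambda>_. local_trees) - PiE_dflt {..<rho} {} (\<lambda>_. star_local_trees)"
  have "finite ?B" using finite_local_trees by auto
  hence "card (PiE_dflt {..<rho} {} (\<lambda>_. spanning_trees (num_vertices G) (edge_list G))
           \<inter> {Ts. \<forall>g<G. \<exists>j<rho. \<not> root_star g \<subseteq> Ts j}) \<le> card (PiE_dflt {..<G} (\<lambda>_. {}) (\<lambda>_. ?B))"
    using round_parts_if_root_stars_missing inj_on_subset[OF inj_on_round_parts]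
    by (intro card_inj_on_le[of "round_parts G rho"]) auto
  thus ?thesis using \<open>finite ?B\<close> by (simp add: card_PiE_dflt card_non_star_rounds)
qed

lemma prob_bad_cut_approx_ge:
  assumes rho: "1 \<le> rho" and c: "c < root_edge_conductance"
  shows "1 - (1 - star_fraction ^ rho) ^ G \<le>
    measure_pmf.prob (tree_samples (num_vertices G) (edge_list G) rho)
      {Ts. bad_cut_approx c (num_vertices G) (edge_list G) rho Ts}"
proof -
  define Om where "Om = PiE_dflt {..<rho} {} (\<lambda>_. spanning_trees (num_vertices G) (edge_list G))"
  define Bad where "Bad = {Ts. bad_cut_approx c (num_vertices G) (edge_list G) rho Ts}"
  let ?L = "real (card local_trees)" and ?F = "real (card star_local_trees)"
  have finOm: "finite Om" using finite_spanning_trees by (auto simp: Om_def)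
  have cardOm: "real (card Om) = (?L ^ rho) ^ G"
    using finite_spanning_trees
    by (simp add: Om_def card_PiE_dflt card_spanning_trees flip: power_mult)
       (simp add: power_mult mult.commute)
  have L_pos: "0 < ?L" using card_local_trees_pos by simp
  have "Om - Bad \<subseteq> Om \<inter> {Ts. \<forall>g<G. \<exists>j<rho. \<not> root_star g \<subseteq> Ts j}"
    unfolding Bad_def using bad_cut_approx_if_root_star_always_sampled[OF _ rho c] by blast
  hence "card (Om - Bad) \<le> card (Om \<inter> {Ts. \<forall>g<G. \<exists>j<rho. \<not> root_star g \<subseteq> Ts j})"
    using finOm by (intro card_mono) auto
  also have "\<dots> \<le> (card local_trees ^ rho - card star_local_trees ^ rho) ^ G"
    unfolding Om_def by (rule card_samples_missing_root_stars)
  finally have "real (card (Om - Bad)) \<le> (?L ^ rho - ?F ^ rho) ^ G"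
    using card_mono[OF finite_local_trees star_local_trees_subset]
    by (metis of_nat_diff of_nat_le_iff of_nat_power power_mono zero_le)
  also have "\<dots> = (?L ^ rho * (1 - star_fraction ^ rho)) ^ G"
    using L_pos by (simp add: star_fraction_def power_divide right_diff_distrib)
  finally have missing: "real (card (Om - Bad)) / real (card Om) \<le> (1 - star_fraction ^ rho) ^ G"
    using L_pos by (simp add: cardOm power_mult_distrib divide_le_eq mult.commute)
  have "tree_samples (num_vertices G) (edge_list G) rho = pmf_of_set Om"
    unfolding tree_samples_def Om_def
    by (rule Pi_pmf_of_set) (simp_all add: finite_spanning_trees spanning_trees_nonempty)
  moreover have "Om \<noteq> {}" using L_pos cardOm by auto
  ultimately have "measure_pmf.prob (tree_samples (num_vertices G) (edge_list G) rho) Bad =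
      1 - real (card (Om - Bad)) / real (card Om)"
    using prob_pmf_of_set_eq_1_minus[OF finOm] by simp
  thus ?thesis using missing unfolding Bad_def by linarith
qed

lemma eventually_prob_bad_cut_approx_ge_half:
  assumes c: "c < root_edge_conductance" and rho: "\<And>k. 1 \<le> rho k" and G: "\<And>k. m + 2 \<le> G k"
    and lim: "(\<lambda>k. real (rho k) / ln (real (num_vertices (G k)))) \<longlonglongrightarrow> 0"
  shows "\<forall>\<^sub>F k in sequentially. 1 / 2 \<le>
           measure_pmf.prob (tree_samples (num_vertices (G k)) (edge_list (G k)) (rho k))
             {Ts. bad_cut_approx c (num_vertices (G k)) (edge_list (G k)) (rho k) Ts}"
proof -
  have "\<forall>\<^sub>F k in sequentially. real (rho k) * - ln star_fraction \<le> ln (real (G k))"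
  proof (rule eventually_mult_le_ln_of_ratio_tendsto_0[OF lim])
    show "2 \<le> num_vertices (G k)" for k using G[of k] by (simp add: num_vertices_def)
    show "num_vertices (G k) \<le> (G k)\<^sup>2" for k using G by (rule num_vertices_le_square)
    show "0 \<le> - ln star_fraction" using star_fraction_pos star_fraction_le_1 by simp
  qed
  thus ?thesis
  proof (rule eventually_mono)
    fix k assume k: "real (rho k) * - ln star_fraction \<le> ln (real (G k))"
    have "1 \<le> G k" using G[of k] by simp
    thus "1 / 2 \<le> measure_pmf.prob (tree_samples (num_vertices (G k)) (edge_list (G k)) (rho k))
             {Ts. bad_cut_approx c (num_vertices (G k)) (edge_list (G k)) (rho k) Ts}"
      using prob_bad_cut_approx_ge[OF rho[of k] c, of "G k"]
        one_minus_power_power_le_half[OF star_fraction_pos star_fraction_le_1 _ k]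
      by linarith
  qed
qed

end

theorem lemma1p10:
  fixes c :: real
  assumes "c \<ge> 1"
  shows "\<exists>(N :: nat \<Rightarrow> nat) (E :: nat \<Rightarrow> (nat \<times> nat) list) (p :: real).
     (\<forall>k. wf_graph (N k) (E k) \<and> connected_graph (N k) (E k)) \<and>
     filterlim N at_top sequentially \<and> p > 0 \<and>
     (\<forall>rho :: nat \<Rightarrow> nat. (\<forall>k. rho k \<ge> 1) \<longrightarrow>
        ((\<lambda>k. real (rho k) / ln (real (N k))) \<longlonglongrightarrow> 0) \<longrightarrow>
        (\<forall>\<^sub>F k in sequentially.
           measure_pmf.prob (tree_samples (N k) (E k) (rho k))
             {Ts. bad_cut_approx c (N k) (E k) (rho k) Ts} \<ge> p))"
proof -
  define m where "m = nat \<lceil>2 * c\<rceil>"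
  have m_c: "2 * c \<le> real m" unfolding m_def by linarith
  have m_2: "2 \<le> m" using m_c assms by linarith
  interpret hub_gadgets m m using m_2 by unfold_locales auto
  have "root_edge_conductance = (real m + 1) / 2"
    using m_2 by (simp add: root_edge_conductance_def field_simps)
  hence c: "c < root_edge_conductance" using m_c by simp
  define G where "G k = k + m + 2" for k
  show ?thesis
  proof (intro exI[of _ "\<lambda>k. num_vertices (G k)"] exI[of _ "\<lambda>k. edge_list (G k)"] exI[of _ "1 / 2"]
      conjI allI impI)
    show "wf_graph (num_vertices (G k)) (edge_list (G k))"
      "connected_graph (num_vertices (G k)) (edge_list (G k))" for k
      by (simp_all add: wf_edge_list connected_edge_list)
    show "filterlim (\<lambda>k. num_vertices (G k)) at_top sequentially"
      by (rule filterlim_at_top_mono[OF filterlim_ident]) (auto simp: G_def num_vertices_def)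
    fix rho :: "nat \<Rightarrow> nat"
    assume "\<forall>k. 1 \<le> rho k" "(\<lambda>k. real (rho k) / ln (real (num_vertices (G k)))) \<longlonglongrightarrow> 0"
    thus "\<forall>\<^sub>F k in sequentially. 1 / 2 \<le> measure_pmf.prob
        (tree_samples (num_vertices (G k)) (edge_list (G k)) (rho k))
        {Ts. bad_cut_approx c (num_vertices (G k)) (edge_list (G k)) (rho k) Ts}"
      by (intro eventually_prob_bad_cut_approx_ge_half[OF c]) (simp_all add: G_def)
  qed simp
qed

end
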